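(* Let $(X_{1,\infty},f_{1,\infty})$ be a topological nonautonomous dynamical system (each $X_n$ a compact metric space with metric $\varrho_n$, each $f_n:X_n\to X_{n+1}$ continuous) which is equicontinuous, and let $\mu_{1,\infty}=\{\mu_n\}$ be an $f_{1,\infty}$-invariant sequence of Borel probability measures. Then \[ h_{\mathcal{E}_{\mathrm{M}}}(f_{1,\infty}) \le h_{\mathrm{top}}(f_{1,\infty}). \]
   Context: Notation: $f_k^0=\mathrm{id}_{X_k}$, $f_k^n=f_{k+n-1}\circ\cdots\circ f_k$, $f_k^{-n}$ denotes preimage under $f_k^n$. Equicontinuity means: for every $\varepsilon>0$ there is $\delta>0$ such that for all $n$ and $x,y\in X_n$, $\varrho_n(x,y)<\delta$ implies $\varrho_{n+1}(f_n(x),f_n(y))<\varepsilon$. Invariance means $f_n\mu_n=\mu_{n+1}$ (push-forward) for all $n$. Topological entropy: $\varrho_{1,n}(x,y)=\max_{0\le i\le n-1}\varrho_{1+i}(f_1^i x,f_1^i y)$ on $X_1$; a set $E\subset X_1$ is $(n,\varepsilon)$-separated if distinct points have $\varrho_{1,n}$-distance $>\varepsilon$; $r_{\mathrm{sep}}(n,\varepsilon)$ is the maximal cardinality of such a set; $h_{\mathrm{top}}(f_{1,\infty})=\lim_{\varepsilon\searrow 0}\limsup_{n\to\infty}\frac1n\log r_{\mathrm{sep}}(n,\varepsilon)$. Metric entropy: for a finite measurable partition $\mathcal{P}$ of a probability space, $H_\mu(\mathcal{P})=-\sum_{P\in\mathcal{P}}\mu(P)\log\mu(P)$; joins $\mathcal{P}\vee\mathcal{Q}=\{P\cap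 Q\}$. For a sequence $\mathcal{P}_{1,\infty}=\{\mathcal{P}_n\}$ of finite (Borel) partitions of $X_n$, $h(f_{1,\infty};\mathcal{P}_{1,\infty})=\limsup_{n\to\infty}\frac1n H_{\mu_1}\big(\bigvee_{i=0}^{n-1}f_1^{-i}\mathcal{P}_{i+1}\big)$. For a class $\mathcal{E}$ of such sequences, $h_{\mathcal{E}}(f_{1,\infty})=\sup_{\mathcal{P}_{1,\infty}\in\mathcal{E}}h(f_{1,\infty};\mathcal{P}_{1,\infty})$. Misiurewicz class $\mathcal{E}_{\mathrm{M}}$: the set of sequences $\mathcal{P}_{1,\infty}$ of finite Borel partitions $\mathcal{P}_n=\{P_{n,1},\dots,P_{n,k_n}\}$ of $X_n$ with $\sup_n k_n<\infty$ such that for every $\varepsilon>0$ there exist $\delta>0$ and compact sets $C_{n,i}\subset P_{n,i}$ with, for every $n$: (a) $\mu_n(P_{n,i}\setminus C_{n,i})\le\varepsilon$ for all $i$; (b) $\varrho_n(x,y)\ge\delta$ whenever $x\in C_{n,i}$, $y\in C_{n,j}$, $i\ne j$. *)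

theory Defs
  imports "HOL-Analysis.Analysis" "HOL-Probability.Probability"
begin

text \<open>Conventions: indices are shifted to start at 0 (paper's X_1 is X 0 here).
All spaces X n are subsets of one ambient type 'a; d n is the metric on X n.\<close>

definition borel_of :: "'a topology \<Rightarrow> 'a measure" where
  "borel_of T = sigma (topspace T) {U. openin T U}"

definition tnds :: "(nat \<Rightarrow> 'a set) \<Rightarrow> (nat \<Rightarrow> 'a \<Rightarrow> 'a \<Rightarrow> real) \<Rightarrow> (nat \<Rightarrow> 'a \<Rightarrow> 'a) \<Rightarrow> bool" where
  "tnds X d f \<longleftrightarrow> (\<forall>n. Metric_space (X n) (d n)
      \<and> compact_space (Metric_space.mtopology (X n) (d n))
      \<and> continuous_map (Metric_space.mtopology (X n) (d n))
                        (Metric_space.mtopology (X (Suc n)) (d (Suc n))) (f n))"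

definition equicontinuous_nds :: "(nat \<Rightarrow> 'a set) \<Rightarrow> (nat \<Rightarrow> 'a \<Rightarrow> 'a \<Rightarrow> real) \<Rightarrow> (nat \<Rightarrow> 'a \<Rightarrow> 'a) \<Rightarrow> bool" where
  "equicontinuous_nds X d f \<longleftrightarrow> (\<forall>\<epsilon>>0. \<exists>\<delta>>0. \<forall>n. \<forall>x\<in>X n. \<forall>y\<in>X n.
      d n x y < \<delta> \<longrightarrow> d (Suc n) (f n x) (f n y) < \<epsilon>)"

definition invariant_measures :: "(nat \<Rightarrow> 'a set) \<Rightarrow> (nat \<Rightarrow> 'a \<Rightarrow> 'a \<Rightarrow> real) \<Rightarrow> (nat \<Rightarrow> 'a \<Rightarrow> 'a) \<Rightarrow> (nat \<Rightarrow> 'a measure) \<Rightarrow> bool" where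
  "invariant_measures X d f \<mu> \<longleftrightarrow> (\<forall>n. prob_space (\<mu> n)
      \<and> space (\<mu> n) = X n
      \<and> sets (\<mu> n) = sets (borel_of (Metric_space.mtopology (X n) (d n)))
      \<and> distr (\<mu> n) (\<mu> (Suc n)) (f n) = \<mu> (Suc n))"

text \<open>Iterates: comp_seq f i = f (i-1) o ... o f 0 (paper's f_1^i).\<close>
fun comp_seq :: "(nat \<Rightarrow> 'a \<Rightarrow> 'a) \<Rightarrow> nat \<Rightarrow> 'a \<Rightarrow> 'a" where
  "comp_seq f 0 = id"
| "comp_seq f (Suc i) = f i \<circ> comp_seq f i"

definition bowen_dist :: "(nat \<Rightarrow> 'a \<Rightarrow> 'a \<Rightarrow> real) \<Rightarrow> (nat \<Rightarrow> 'a \<Rightarrow> 'a) \<Rightarrow> nat \<Rightarrow> 'a \<Rightarrow> 'a \<Rightarrow> real" where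
  "bowen_dist d f n x y = Max {d i (comp_seq f i x) (comp_seq f i y) | i. i < n}"

definition separated_set :: "(nat \<Rightarrow> 'a set) \<Rightarrow> (nat \<Rightarrow> 'a \<Rightarrow> 'a \<Rightarrow> real) \<Rightarrow> (nat \<Rightarrow> 'a \<Rightarrow> 'a) \<Rightarrow> nat \<Rightarrow> real \<Rightarrow> 'a set \<Rightarrow> bool" where
  "separated_set X d f n \<epsilon> E \<longleftrightarrow> E \<subseteq> X 0 \<and>
      (\<forall>x\<in>E. \<forall>y\<in>E. x \<noteq> y \<longrightarrow> bowen_dist d f n x y > \<epsilon>)"

definition r_sep :: "(nat \<Rightarrow> 'a set) \<Rightarrow> (nat \<Rightarrow> 'a \<Rightarrow> 'a \<Rightarrow> real) \<Rightarrow> (nat \<Rightarrow> 'a \<Rightarrow> 'a) \<Rightarrow> nat \<Rightarrow> real \<Rightarrow> nat" where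
  "r_sep X d f n \<epsilon> = Sup {card E | E. finite E \<and> separated_set X d f n \<epsilon> E}"

definition top_entropy :: "(nat \<Rightarrow> 'a set) \<Rightarrow> (nat \<Rightarrow> 'a \<Rightarrow> 'a \<Rightarrow> real) \<Rightarrow> (nat \<Rightarrow> 'a \<Rightarrow> 'a) \<Rightarrow> ereal" where
  "top_entropy X d f = Lim (at_right (0::real))
     (\<lambda>\<epsilon>. limsup (\<lambda>n. ereal (ln (real (r_sep X d f n \<epsilon>)) / real n)))"

text \<open>Shannon entropy of a finite family (set) of measurable sets; 0 log 0 = 0
(in Isabelle ln 0 = 0).\<close>
definition partition_entropy :: "'a measure \<Rightarrow> 'a set set \<Rightarrow> real" where
  "partition_entropy M \<P> = - (\<Sum>A\<in>\<P>. measure M A * ln (measure M A))"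

definition borel_partition_seq :: "(nat \<Rightarrow> 'a set) \<Rightarrow> (nat \<Rightarrow> 'a \<Rightarrow> 'a \<Rightarrow> real) \<Rightarrow> (nat \<Rightarrow> nat) \<Rightarrow> (nat \<Rightarrow> nat \<Rightarrow> 'a set) \<Rightarrow> bool" where
  "borel_partition_seq X d k P \<longleftrightarrow> (\<forall>n.
      (\<forall>i<k n. P n i \<noteq> {} \<and> P n i \<in> sets (borel_of (Metric_space.mtopology (X n) (d n))))
    \<and> (\<forall>i<k n. \<forall>j<k n. i \<noteq> j \<longrightarrow> P n i \<inter> P n j = {})
    \<and> (\<Union>i<k n. P n i) = X n)"

definition join_partition :: "(nat \<Rightarrow> 'a set) \<Rightarrow> (nat \<Rightarrow> 'a \<Rightarrow> 'a) \<Rightarrow> (nat \<Rightarrow> nat) \<Rightarrow> (nat \<Rightarrow> nat \<Rightarrow> 'a set) \<Rightarrow> nat \<Rightarrow> 'a set set" where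
  "join_partition X f k P n =
     {X 0 \<inter> (\<Inter>i<n. comp_seq f i -` P i (s i)) | s. \<forall>i<n. s i < k i}"

definition metric_entropy_part :: "(nat \<Rightarrow> 'a set) \<Rightarrow> (nat \<Rightarrow> 'a \<Rightarrow> 'a) \<Rightarrow> (nat \<Rightarrow> 'a measure) \<Rightarrow> (nat \<Rightarrow> nat) \<Rightarrow> (nat \<Rightarrow> nat \<Rightarrow> 'a set) \<Rightarrow> ereal" where
  "metric_entropy_part X f \<mu> k P =
     limsup (\<lambda>n. ereal (partition_entropy (\<mu> 0) (join_partition X f k P n) / real n))"

definition misiurewicz_class :: "(nat \<Rightarrow> 'a set) \<Rightarrow> (nat \<Rightarrow> 'a \<Rightarrow> 'a \<Rightarrow> real) \<Rightarrow> (nat \<Rightarrow> 'a measure) \<Rightarrow> ((nat \<Rightarrow> nat) \<times> (nat \<Rightarrow> nat \<Rightarrow> 'a set)) set" where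
  "misiurewicz_class X d \<mu> = {(k, P). borel_partition_seq X d k P
     \<and> (\<exists>K. \<forall>n. k n \<le> K)
     \<and> (\<forall>\<epsilon>>0. \<exists>\<delta>>0. \<exists>C. \<forall>n. \<forall>i<k n.
          C n i \<subseteq> P n i \<and> compactin (Metric_space.mtopology (X n) (d n)) (C n i)
        \<and> measure (\<mu> n) (P n i - C n i) \<le> \<epsilon>
        \<and> (\<forall>j<k n. i \<noteq> j \<longrightarrow> (\<forall>x\<in>C n i. \<forall>y\<in>C n j. d n x y \<ge> \<delta>)))}"

definition class_entropy :: "(nat \<Rightarrow> 'a set) \<Rightarrow> (nat \<Rightarrow> 'a \<Rightarrow> 'a) \<Rightarrow> (nat \<Rightarrow> 'a measure) \<Rightarrow> ((nat \<Rightarrow> nat) \<times> (nat \<Rightarrow> nat \<Rightarrow> 'a set)) set \<Rightarrow> ereal" where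
  "class_entropy X f \<mu> \<E> = (SUP (k, P) \<in> \<E>. metric_entropy_part X f \<mu> k P)"

end

theory Submission
  imports Defs
begin

text \<open>Fix a partition sequence of the Misiurewicz class with at most \<open>K\<close> elements, a block
length \<open>m\<close> and, for a tolerance \<open>\<epsilon>\<close>, compact cores \<open>C\<close> that are \<open>\<delta>\<close>-apart and miss mass at most
\<open>\<epsilon>\<close>. On a block of times at which the orbit of \<open>x\<close> stays in the cores, the itinerary of \<open>x\<close> is
determined by any point \<open>\<delta>/3\<close>-close to \<open>x\<close> in the Bowen metric; so the itineraries with all other
blocks erased number at most \<open>r_sep(N, \<delta>/3) \<cdot> 2^(N/m + 1)\<close>. Comparing, by Gibbs' inequality, the
entropy of the join with the weight that spreads every erased symbol uniformly over \<open>K\<close> letters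
costs at most \<open>ln K\<close> times the expected number of erased symbols, which is at most \<open>N m K \<epsilon>\<close>
by invariance. Hence \<open>h(P) \<le> h_top + ln 2 / m + m K \<epsilon> ln K\<close>; let \<open>m \<rightarrow> \<infinity>\<close> and then \<open>\<epsilon> \<rightarrow> 0\<close>.\<close>

lemma space_borel_of: "space (borel_of T) = topspace T"
  unfolding borel_of_def by (subst space_measure_of) (auto dest: openin_subset)

lemma borel_of_open: "openin T U \<Longrightarrow> U \<in> sets (borel_of T)"
  unfolding borel_of_def by (subst sets_measure_of) (auto dest: openin_subset)

lemma borel_of_closed:
  assumes "closedin T U"
  shows "U \<in> sets (borel_of T)"
proof -
  have "topspace T - U \<in> sets (borel_of T)"
    using assms by (intro borel_of_open) (auto simp: closedin_def)
  then have "space (borel_of T) - (topspace T - U) \<in> sets (borel_of T)"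
    by (rule sets.compl_sets)
  moreover have "space (borel_of T) - (topspace T - U) = U"
    using assms closedin_subset space_borel_of by fastforce
  ultimately show ?thesis by simp
qed

lemma continuous_map_measurable_borel_of:
  assumes g: "continuous_map T U g"
  shows "g \<in> measurable (borel_of T) (borel_of U)"
  unfolding borel_of_def[of U]
proof (rule measurable_measure_of)
  show "{V. openin U V} \<subseteq> Pow (topspace U)" by (auto dest: openin_subset)
  show "g \<in> space (borel_of T) \<rightarrow> topspace U"
    using g space_borel_of[of T] unfolding continuous_map_def by auto
  fix V assume "V \<in> {V. openin U V}"
  then have "openin T {x \<in> topspace T. g x \<in> V}"
    using g unfolding continuous_map_def by auto
  moreover have "g -` V \<inter> space (borel_of T) = {x \<in> topspace T. g x \<in> V}"
    using space_borel_of[of T] by auto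
  ultimately show "g -` V \<inter> space (borel_of T) \<in> sets (borel_of T)"
    using borel_of_open by metis
qed

lemma entropy_le_cross_entropy:
  fixes p w :: "'i \<Rightarrow> real"
  assumes "finite I" and p: "\<And>i. i \<in> I \<Longrightarrow> p i \<ge> 0" "sum p I = 1"
    and w: "\<And>i. i \<in> I \<Longrightarrow> w i > 0" "sum w I \<le> 1"
  shows "- (\<Sum>i\<in>I. p i * ln (p i)) \<le> - (\<Sum>i\<in>I. p i * ln (w i))"
proof -
  have "p i * ln (w i) - p i * ln (p i) \<le> w i - p i" if i: "i \<in> I" for i
  proof (cases "p i = 0")
    case True
    then show ?thesis using w(1)[OF i] by simp
  next
    case False
    then have pi: "p i > 0" using p(1)[OF i] by simp
    have "p i * ln (w i / p i) \<le> p i * (w i / p i - 1)"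
      using ln_le_minus_one[of "w i / p i"] pi w(1)[OF i] by (simp add: mult_left_mono)
    moreover have "ln (w i / p i) = ln (w i) - ln (p i)"
      using pi w(1)[OF i] by (simp add: ln_div)
    ultimately show ?thesis using pi by (simp add: algebra_simps)
  qed
  then have "(\<Sum>i\<in>I. p i * ln (w i) - p i * ln (p i)) \<le> (\<Sum>i\<in>I. w i - p i)"
    by (rule sum_mono)
  then show ?thesis using p(2) w(2) by (simp add: sum_subtractf)
qed

lemma
  fixes h :: "'a \<Rightarrow> 'v" and F :: "'v \<Rightarrow> real"
  assumes "finite_measure M" and fin: "finite (h ` space M)"
    and sets: "\<And>v. v \<in> h ` space M \<Longrightarrow> h -` {v} \<inter> space M \<in> sets M"
  shows integrable_finite_range: "integrable M (\<lambda>x. F (h x))"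
    and integral_finite_range:
      "integral\<^sup>L M (\<lambda>x. F (h x)) = (\<Sum>v\<in>h ` space M. F v * measure M (h -` {v} \<inter> space M))"
proof -
  interpret finite_measure M by fact
  let ?ind = "\<lambda>v. indicator (h -` {v} \<inter> space M) :: 'a \<Rightarrow> real"
  have sum_ind: "F (h x) = (\<Sum>v\<in>h ` space M. F v * ?ind v x)" if x: "x \<in> space M" for x
  proof -
    have "(\<Sum>v\<in>h ` space M. F v * ?ind v x) = (\<Sum>v\<in>{h x}. F v * ?ind v x)"
      by (rule sum.mono_neutral_right) (use fin x in \<open>auto simp: indicator_def\<close>)
    then show ?thesis using x by simp
  qed
  have ind: "integrable M (?ind v)" if "v \<in> h ` space M" for v
    using sets[OF that] by (intro integrable_real_indicator) (auto simp: emeasure_finite less_top[symmetric])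
  then have "integrable M (\<lambda>x. \<Sum>v\<in>h ` space M. F v * ?ind v x)"
    by (intro Bochner_Integration.integrable_sum integrable_mult_right)
  moreover have "integrable M (\<lambda>x. F (h x)) \<longleftrightarrow> integrable M (\<lambda>x. \<Sum>v\<in>h ` space M. F v * ?ind v x)"
    by (rule Bochner_Integration.integrable_cong) (auto simp: sum_ind)
  ultimately show "integrable M (\<lambda>x. F (h x))" by simp
  have "integral\<^sup>L M (\<lambda>x. F (h x)) = integral\<^sup>L M (\<lambda>x. \<Sum>v\<in>h ` space M. F v * ?ind v x)"
    by (rule Bochner_Integration.integral_cong) (simp_all add: sum_ind)
  also have "\<dots> = (\<Sum>v\<in>h ` space M. F v * measure M (h -` {v} \<inter> space M))"
    using sets ind by (subst Bochner_Integration.integral_sum) (auto intro!: sum.cong)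
  finally show "integral\<^sup>L M (\<lambda>x. F (h x)) = (\<Sum>v\<in>h ` space M. F v * measure M (h -` {v} \<inter> space M))" .
qed

lemma card_image_div_lessThan: "card ((\<lambda>i. i div m) ` {..<N}) \<le> N div m + 1" for m N :: nat
proof -
  have "(\<lambda>i. i div m) ` {..<N} \<subseteq> {..N div m}" by (auto intro: div_le_mono)
  then show ?thesis using card_mono[of "{..N div m}"] by fastforce
qed

definition compact_cores ::
    "(nat \<Rightarrow> 'a set) \<Rightarrow> (nat \<Rightarrow> 'a \<Rightarrow> 'a \<Rightarrow> real) \<Rightarrow> (nat \<Rightarrow> 'a measure) \<Rightarrow> (nat \<Rightarrow> nat)
      \<Rightarrow> (nat \<Rightarrow> nat \<Rightarrow> 'a set) \<Rightarrow> real \<Rightarrow> real \<Rightarrow> (nat \<Rightarrow> nat \<Rightarrow> 'a set) \<Rightarrow> bool" where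
  "compact_cores X d \<mu> k P \<epsilon> \<delta> C \<longleftrightarrow> (\<forall>n. \<forall>i<k n.
      C n i \<subseteq> P n i \<and> compactin (Metric_space.mtopology (X n) (d n)) (C n i)
    \<and> measure (\<mu> n) (P n i - C n i) \<le> \<epsilon>
    \<and> (\<forall>j<k n. i \<noteq> j \<longrightarrow> (\<forall>x\<in>C n i. \<forall>y\<in>C n j. d n x y \<ge> \<delta>)))"

lemma misiurewicz_classD:
  assumes "(k, P) \<in> misiurewicz_class X d \<mu>"
  shows "borel_partition_seq X d k P" and "\<exists>K. \<forall>n. k n \<le> K"
    and "\<epsilon> > 0 \<Longrightarrow> \<exists>\<delta>>0. \<exists>C. compact_cores X d \<mu> k P \<epsilon> \<delta> C"
  using assms unfolding misiurewicz_class_def compact_cores_def by blast+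

locale measured_tnds =
  fixes X :: "nat \<Rightarrow> 'a set" and d :: "nat \<Rightarrow> 'a \<Rightarrow> 'a \<Rightarrow> real"
    and f :: "nat \<Rightarrow> 'a \<Rightarrow> 'a" and \<mu> :: "nat \<Rightarrow> 'a measure"
  assumes tnds: "tnds X d f" and invariant: "invariant_measures X d f \<mu>"
begin

abbreviation "mtop n \<equiv> Metric_space.mtopology (X n) (d n)"
abbreviation "iter i \<equiv> comp_seq f i"

lemma Metric_space_X: "Metric_space (X n) (d n)"
  and compact_space_X: "compact_space (mtop n)"
  and continuous_f: "continuous_map (mtop n) (mtop (Suc n)) (f n)"
  using tnds unfolding tnds_def by auto

lemma prob_space_\<mu>: "prob_space (\<mu> n)"
  and space_\<mu>: "space (\<mu> n) = X n"
  and sets_\<mu>: "sets (\<mu> n) = sets (borel_of (mtop n))"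
  and distr_\<mu>: "distr (\<mu> n) (\<mu> (Suc n)) (f n) = \<mu> (Suc n)"
  using invariant unfolding invariant_measures_def by auto

lemma topspace_mtop: "topspace (mtop n) = X n"
  using Metric_space.topspace_mtopology[OF Metric_space_X] .

lemma d_commute: "x \<in> X n \<Longrightarrow> y \<in> X n \<Longrightarrow> d n x y = d n y x"
  using Metric_space.commute[OF Metric_space_X] by blast

lemma d_self: "x \<in> X n \<Longrightarrow> d n x x = 0"
  using Metric_space.mdist_zero[OF Metric_space_X] by blast

lemma d_triangle: "x \<in> X n \<Longrightarrow> y \<in> X n \<Longrightarrow> z \<in> X n \<Longrightarrow> d n x z \<le> d n x y + d n y z"
  using Metric_space.triangle[OF Metric_space_X] by blast

lemma X0_nonempty: "X 0 \<noteq> {}"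
  using prob_space.not_empty[OF prob_space_\<mu>] space_\<mu> by simp

lemma continuous_iter: "continuous_map (mtop 0) (mtop i) (iter i)"
proof (induction i)
  case (Suc i)
  then show ?case using continuous_map_compose[OF Suc.IH continuous_f] by (simp add: comp_def)
qed simp

lemma iter_in: "x \<in> X 0 \<Longrightarrow> iter i x \<in> X i"
  using continuous_iter[of i] topspace_mtop unfolding continuous_map_def by fastforce

lemma measurable_\<mu>: "continuous_map (mtop a) (mtop b) g \<Longrightarrow> g \<in> measurable (\<mu> a) (\<mu> b)"
  using continuous_map_measurable_borel_of by (simp add: measurable_cong_sets[OF sets_\<mu> sets_\<mu>])

lemma measurable_iter: "iter i \<in> measurable (\<mu> 0) (\<mu> i)"
  using measurable_\<mu>[OF continuous_iter] .

lemma measure_iter_vimage: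
  "A \<in> sets (\<mu> i) \<Longrightarrow> measure (\<mu> 0) (iter i -` A \<inter> X 0) = measure (\<mu> i) A"
proof (induction i arbitrary: A)
  case 0
  then show ?case using sets.sets_into_space[OF 0] space_\<mu>[of 0] by (simp add: Int_absorb2)
next
  case (Suc i)
  have f: "f i \<in> measurable (\<mu> i) (\<mu> (Suc i))" using measurable_\<mu>[OF continuous_f] .
  have B: "f i -` A \<inter> X i \<in> sets (\<mu> i)" using measurable_sets[OF f Suc.prems] space_\<mu> by simp
  have "iter (Suc i) -` A \<inter> X 0 = iter i -` (f i -` A \<inter> X i) \<inter> X 0" using iter_in by auto
  then have "measure (\<mu> 0) (iter (Suc i) -` A \<inter> X 0) = measure (\<mu> i) (f i -` A \<inter> X i)"
    using Suc.IH[OF B] by simp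
  also have "\<dots> = measure (distr (\<mu> i) (\<mu> (Suc i)) (f i)) A"
    using measure_distr[OF f Suc.prems] space_\<mu> by simp
  finally show ?case using distr_\<mu> by (simp add: comp_def)
qed

lemma bowen_dist_ge: "i < N \<Longrightarrow> d i (iter i x) (iter i y) \<le> bowen_dist d f N x y"
  unfolding bowen_dist_def by (rule Max_ge) auto

lemma bowen_dist_less:
  "N \<ge> 1 \<Longrightarrow> (\<And>i. i < N \<Longrightarrow> d i (iter i x) (iter i y) < r) \<Longrightarrow> bowen_dist d f N x y < r"
  unfolding bowen_dist_def by (subst Max_less_iff) (auto intro!: exI[of _ 0])

lemma bowen_dist_commute:
  assumes "x \<in> X 0" "y \<in> X 0"
  shows "bowen_dist d f N x y = bowen_dist d f N y x"
proof -
  have "{d i (iter i x) (iter i y) |i. i < N} = {d i (iter i y) (iter i x) |i. i < N}"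
    using assms d_commute iter_in by metis
  then show ?thesis unfolding bowen_dist_def by simp
qed

lemma finite_cover_small_bowen_diameter:
  assumes "\<epsilon> > 0"
  obtains \<F> where "finite \<F>" "X 0 \<subseteq> \<Union>\<F>"
    "\<And>V x y i. V \<in> \<F> \<Longrightarrow> x \<in> V \<Longrightarrow> y \<in> V \<Longrightarrow> i < N \<Longrightarrow> d i (iter i x) (iter i y) < \<epsilon>"
proof -
  define U where "U x = (\<Inter>i<N. {y \<in> topspace (mtop 0).
      iter i y \<in> Metric_space.mball (X i) (d i) (iter i x) (\<epsilon>/2)}) \<inter> topspace (mtop 0)" for x
  have "openin (mtop 0) (U x)" for x
    unfolding U_def
    by (rule openin_INT) (auto intro!: openin_continuous_map_preimage[OF continuous_iter]
        Metric_space.openin_mball[OF Metric_space_X])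
  moreover have U: "y \<in> U x \<longleftrightarrow> y \<in> X 0 \<and> (\<forall>i<N. iter i x \<in> X i \<and> d i (iter i x) (iter i y) < \<epsilon>/2)" for x y
    unfolding U_def topspace_mtop using Metric_space.in_mball[OF Metric_space_X] iter_in by auto
  moreover have "x \<in> U x" if "x \<in> X 0" for x
    using U[of x x] that iter_in d_self assms by simp
  then have "X 0 \<subseteq> \<Union>(U ` X 0)" by blast
  ultimately obtain \<F> where \<F>: "finite \<F>" "\<F> \<subseteq> U ` X 0" "X 0 \<subseteq> \<Union>\<F>"
    using compact_space_X[of 0] unfolding compact_space_def compactin_def topspace_mtop by (metis imageE)
  show thesis
  proof (rule that[OF \<F>(1,3)])
    fix V x y i assume "V \<in> \<F>" "x \<in> V" "y \<in> V" "i < N"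
    then obtain z where "x \<in> U z" "y \<in> U z" using \<F>(2) by blast
    with \<open>i < N\<close> have "d i (iter i z) (iter i x) < \<epsilon>/2" "d i (iter i z) (iter i y) < \<epsilon>/2"
      "iter i x \<in> X i" "iter i y \<in> X i" "iter i z \<in> X i"
      using U iter_in by auto
    then show "d i (iter i x) (iter i y) < \<epsilon>"
      using d_triangle[of "iter i x" i "iter i z" "iter i y"] d_commute[of "iter i x" i "iter i z"] by linarith
  qed
qed

lemma separated_set_card_bounded:
  assumes "N \<ge> 1" "\<epsilon> > 0"
  obtains B where "\<And>E. finite E \<Longrightarrow> separated_set X d f N \<epsilon> E \<Longrightarrow> card E \<le> B"
proof -
  obtain \<F> where \<F>: "finite \<F>" "X 0 \<subseteq> \<Union>\<F>"
    "\<And>V x y i. V \<in> \<F> \<Longrightarrow> x \<in> V \<Longrightarrow> y \<in> V \<Longrightarrow> i < N \<Longrightarrow> d i (iter i x) (iter i y) < \<epsilon>"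
    by (rule finite_cover_small_bowen_diameter[OF assms(2), where N = N]) blast
  have bound: "card E \<le> card \<F>" if E: "finite E" "separated_set X d f N \<epsilon> E" for E
  proof -
    have "E \<subseteq> X 0" using E unfolding separated_set_def by simp
    define g where "g x = (SOME V. V \<in> \<F> \<and> x \<in> V)" for x
    have g: "g x \<in> \<F> \<and> x \<in> g x" if "x \<in> E" for x
      unfolding g_def by (rule someI_ex) (use that \<open>E \<subseteq> X 0\<close> \<F>(2) in blast)
    have "inj_on g E"
    proof (rule inj_onI, rule ccontr)
      fix x y assume xy: "x \<in> E" "y \<in> E" "g x = g y" "x \<noteq> y"
      have "d i (iter i x) (iter i y) < \<epsilon>" if "i < N" for i
        using \<F>(3)[of "g x" x y i] g[OF xy(1)] g[OF xy(2)] xy(3) that by simp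
      then have "bowen_dist d f N x y < \<epsilon>" by (rule bowen_dist_less[OF assms(1)])
      moreover have "bowen_dist d f N x y > \<epsilon>" using E xy unfolding separated_set_def by auto
      ultimately show False by simp
    qed
    moreover have "g ` E \<subseteq> \<F>" using g by auto
    ultimately show ?thesis using card_inj_on_le \<F>(1) by blast
  qed
  show thesis by (rule that[OF bound])
qed

text \<open>Maximality makes the set spanning: a point far from all its elements could be added to it.\<close>

lemma obtain_maximal_separated_set:
  assumes N: "N \<ge> 1" and \<epsilon>: "\<epsilon> > 0"
  obtains E where "finite E" "separated_set X d f N \<epsilon> E" "card E = r_sep X d f N \<epsilon>"
    "\<And>x. x \<in> X 0 \<Longrightarrow> \<exists>e\<in>E. \<forall>i<N. d i (iter i x) (iter i e) \<le> \<epsilon>"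
proof -
  define S where "S = {card E | E. finite E \<and> separated_set X d f N \<epsilon> E}"
  obtain B where B: "\<And>E. finite E \<Longrightarrow> separated_set X d f N \<epsilon> E \<Longrightarrow> card E \<le> B"
    by (rule separated_set_card_bounded[OF N \<epsilon>]) blast
  have "S \<noteq> {}" unfolding S_def separated_set_def by auto
  have "finite S"
    using B unfolding S_def by (intro finite_nat_set_iff_bounded_le[THEN iffD2]) auto
  have r_sep: "r_sep X d f N \<epsilon> = Max S"
    unfolding r_sep_def S_def[symmetric] Sup_nat_def using \<open>S \<noteq> {}\<close> by simp
  have "Max S \<in> S" using \<open>S \<noteq> {}\<close> \<open>finite S\<close> by simp
  then obtain E where E: "finite E" "separated_set X d f N \<epsilon> E" "card E = r_sep X d f N \<epsilon>"
    using r_sep unfolding S_def by auto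
  have spanning: "\<exists>e\<in>E. \<forall>i<N. d i (iter i x) (iter i e) \<le> \<epsilon>" if x: "x \<in> X 0" for x
  proof (rule ccontr)
    assume "\<not> ?thesis"
    then have far: "\<forall>e\<in>E. \<exists>i<N. d i (iter i x) (iter i e) > \<epsilon>" by (auto simp: not_le)
    then have "x \<notin> E" using x d_self iter_in \<epsilon> by fastforce
    have "E \<subseteq> X 0" using E(2) unfolding separated_set_def by simp
    have "separated_set X d f N \<epsilon> (insert x E)"
      unfolding separated_set_def
    proof (intro conjI ballI impI)
      show "insert x E \<subseteq> X 0" using x \<open>E \<subseteq> X 0\<close> by simp
      have bx: "bowen_dist d f N x e > \<epsilon>" if "e \<in> E" for e
        using far that bowen_dist_ge by (meson less_le_trans)
      fix y z assume "y \<in> insert x E" "z \<in> insert x E" "y \<noteq> z"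
      then show "\<epsilon> < bowen_dist d f N y z"
        using E(2) bx bowen_dist_commute x \<open>E \<subseteq> X 0\<close> unfolding separated_set_def
        by (metis insert_iff subsetD)
    qed
    then have "card (insert x E) \<in> S" unfolding S_def using E(1) by blast
    then have "card (insert x E) \<le> Max S" using \<open>finite S\<close> by simp
    then show False using E \<open>x \<notin> E\<close> r_sep by simp
  qed
  show thesis by (rule that[OF E spanning])
qed

lemma r_sep_ge_1:
  assumes "N \<ge> 1" "\<epsilon> > 0"
  shows "r_sep X d f N \<epsilon> \<ge> 1"
proof -
  obtain E where "finite E" "separated_set X d f N \<epsilon> E" "card E = r_sep X d f N \<epsilon>"
    "\<And>x. x \<in> X 0 \<Longrightarrow> \<exists>e\<in>E. \<forall>i<N. d i (iter i x) (iter i e) \<le> \<epsilon>"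
    by (rule obtain_maximal_separated_set[OF assms]) blast
  then have "E \<noteq> {}" using X0_nonempty by blast
  with \<open>finite E\<close> \<open>card E = r_sep X d f N \<epsilon>\<close> show ?thesis
    by (metis One_nat_def Suc_leI card_gt_0_iff)
qed

lemma r_sep_antimono:
  assumes N: "N \<ge> 1" and "0 < \<epsilon>'" "\<epsilon>' \<le> \<epsilon>"
  shows "r_sep X d f N \<epsilon> \<le> r_sep X d f N \<epsilon>'"
  unfolding r_sep_def
proof (rule cSup_subset_mono)
  show "{card E | E. finite E \<and> separated_set X d f N \<epsilon> E} \<noteq> {}"
    by (auto simp: separated_set_def intro!: exI[of _ "{}"])
  obtain B where "\<And>E. finite E \<Longrightarrow> separated_set X d f N \<epsilon>' E \<Longrightarrow> card E \<le> B"
    by (rule separated_set_card_bounded[OF N \<open>0 < \<epsilon>'\<close>]) blast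
  then show "bdd_above {card E | E. finite E \<and> separated_set X d f N \<epsilon>' E}"
    by (auto simp: bdd_above_def)
  show "{card E | E. finite E \<and> separated_set X d f N \<epsilon> E} \<subseteq> {card E | E. finite E \<and> separated_set X d f N \<epsilon>' E}"
    using assms unfolding separated_set_def by fastforce
qed

definition separation_growth :: "real \<Rightarrow> ereal" where
  "separation_growth \<epsilon> = limsup (\<lambda>n. ereal (ln (real (r_sep X d f n \<epsilon>)) / real n))"

lemma separation_growth_antimono:
  assumes "0 < \<epsilon>'" "\<epsilon>' \<le> \<epsilon>"
  shows "separation_growth \<epsilon> \<le> separation_growth \<epsilon>'"
  unfolding separation_growth_def
proof (intro Limsup_mono always_eventually allI)
  fix n
  show "ereal (ln (real (r_sep X d f n \<epsilon>)) / real n) \<le> ereal (ln (real (r_sep X d f n \<epsilon>')) / real n)"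
  proof (cases "n = 0")
    case False
    then have "ln (real (r_sep X d f n \<epsilon>)) \<le> ln (real (r_sep X d f n \<epsilon>'))"
      using r_sep_ge_1[of n \<epsilon>] r_sep_antimono[of n \<epsilon>' \<epsilon>] assms False by simp
    then show ?thesis by (simp add: divide_right_mono)
  qed simp
qed

lemma top_entropy_eq_SUP: "top_entropy X d f = (SUP \<epsilon>\<in>{0<..}. separation_growth \<epsilon>)"
proof -
  have lim: "(separation_growth \<longlongrightarrow> (SUP \<epsilon>\<in>{0<..}. separation_growth \<epsilon>)) (at_right 0)"
  proof (rule order_tendstoI)
    fix a assume "a < (SUP \<epsilon>\<in>{0<..}. separation_growth \<epsilon>)"
    then obtain \<epsilon>0 where "\<epsilon>0 > 0" "a < separation_growth \<epsilon>0" by (auto simp: less_SUP_iff)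
    then show "\<forall>\<^sub>F \<epsilon> in at_right 0. a < separation_growth \<epsilon>"
      unfolding eventually_at_right_field using separation_growth_antimono
      by (intro exI[of _ \<epsilon>0]) (auto intro: less_le_trans)
  next
    fix a assume a: "(SUP \<epsilon>\<in>{0<..}. separation_growth \<epsilon>) < a"
    show "\<forall>\<^sub>F \<epsilon> in at_right 0. separation_growth \<epsilon> < a"
      unfolding eventually_at_right_field by (intro exI[of _ 1]) (auto intro!: le_less_trans[OF _ a] SUP_upper)
  qed
  have "top_entropy X d f = Lim (at_right 0) separation_growth"
    unfolding top_entropy_def separation_growth_def ..
  also have "\<dots> = (SUP \<epsilon>\<in>{0<..}. separation_growth \<epsilon>)"
    by (rule tendsto_Lim[OF _ lim]) simp
  finally show ?thesis .
qed

lemma separation_growth_le_top_entropy: "\<epsilon> > 0 \<Longrightarrow> separation_growth \<epsilon> \<le> top_entropy X d f"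
  unfolding top_entropy_eq_SUP by (rule SUP_upper) simp

end

locale misiurewicz_coding = measured_tnds X d f \<mu> for X :: "nat \<Rightarrow> 'a set" and d f \<mu> +
  fixes k :: "nat \<Rightarrow> nat" and P :: "nat \<Rightarrow> nat \<Rightarrow> 'a set" and K :: nat
    and \<epsilon> \<delta> :: real and C :: "nat \<Rightarrow> nat \<Rightarrow> 'a set" and m N :: nat
  assumes partition: "borel_partition_seq X d k P" and k_le_K: "\<And>n. k n \<le> K" and K_ge_1: "K \<ge> 1"
    and cores: "compact_cores X d \<mu> k P \<epsilon> \<delta> C"
    and \<epsilon>_pos: "\<epsilon> > 0" and \<delta>_pos: "\<delta> > 0" and m_ge_1: "m \<ge> 1" and N_ge_1: "N \<ge> 1"
begin

lemma P_sets: "a < k n \<Longrightarrow> P n a \<in> sets (\<mu> n)"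
  and P_disjoint: "a < k n \<Longrightarrow> b < k n \<Longrightarrow> a \<noteq> b \<Longrightarrow> P n a \<inter> P n b = {}"
  and P_cover: "(\<Union>a<k n. P n a) = X n"
  using partition sets_\<mu> unfolding borel_partition_seq_def by auto

lemma C_subset: "a < k n \<Longrightarrow> C n a \<subseteq> P n a"
  and C_compact: "a < k n \<Longrightarrow> compactin (mtop n) (C n a)"
  and measure_P_minus_C: "a < k n \<Longrightarrow> measure (\<mu> n) (P n a - C n a) \<le> \<epsilon>"
  and C_separated: "a < k n \<Longrightarrow> b < k n \<Longrightarrow> a \<noteq> b \<Longrightarrow> x \<in> C n a \<Longrightarrow> y \<in> C n b \<Longrightarrow> d n x y \<ge> \<delta>"
  using cores unfolding compact_cores_def by auto

lemma C_sets: "a < k n \<Longrightarrow> C n a \<in> sets (\<mu> n)"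
  using borel_of_closed[OF compactin_imp_closedin[OF Metric_space.Hausdorff_space_mtopology[OF Metric_space_X]
        C_compact]] sets_\<mu> by auto

definition "label i x = (SOME a. a < k i \<and> iter i x \<in> P i a)"
definition "itinerary x = restrict (\<lambda>i. label i x) {..<N}"
definition "cylinder s = X 0 \<inter> (\<Inter>i<N. iter i -` P i (s i))"
definition "in_core i x \<longleftrightarrow> (\<exists>a<k i. iter i x \<in> C i a)"
definition "good_block j x \<longleftrightarrow> (\<forall>i<N. i div m = j \<longrightarrow> in_core i x)"
definition "code x = restrict (\<lambda>i. if good_block (i div m) x then Some (label i x) else None) {..<N}"
definition "codes = code ` X 0"

lemma label: "x \<in> X 0 \<Longrightarrow> label i x < k i \<and> iter i x \<in> P i (label i x)"
  unfolding label_def by (rule someI_ex) (use iter_in P_cover in blast)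

lemma label_unique: "x \<in> X 0 \<Longrightarrow> a < k i \<Longrightarrow> iter i x \<in> P i a \<Longrightarrow> label i x = a"
  using label P_disjoint by blast

lemma mem_cylinder_iff:
  assumes "\<forall>i<N. s i < k i"
  shows "y \<in> cylinder s \<longleftrightarrow> y \<in> X 0 \<and> (\<forall>i<N. label i y = s i)"
proof -
  have "iter i y \<in> P i (s i) \<longleftrightarrow> label i y = s i" if "y \<in> X 0" "i < N" for i
    using label[OF that(1), of i] label_unique[OF that(1)] assms that(2) by metis
  then show ?thesis unfolding cylinder_def by auto
qed

lemma itinerary_apply: "i < N \<Longrightarrow> itinerary x i = label i x"
  unfolding itinerary_def by simp

lemma itinerary_eq_iff: "itinerary y = itinerary x \<longleftrightarrow> (\<forall>i<N. label i y = label i x)"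
proof
  assume "itinerary y = itinerary x"
  then show "\<forall>i<N. label i y = label i x"
    unfolding itinerary_def by (metis lessThan_iff restrict_apply')
qed (auto simp: itinerary_def intro!: restrict_ext)

lemma itinerary_in_PiE: "x \<in> X 0 \<Longrightarrow> itinerary x \<in> PiE {..<N} (\<lambda>i. {..<k i})"
  unfolding itinerary_def by (rule restrict_PiE_iff[THEN iffD2]) (use label in auto)

lemma cylinder_itinerary:
  assumes "x \<in> X 0"
  shows "cylinder (itinerary x) = {y \<in> X 0. itinerary y = itinerary x}"
proof -
  have "\<forall>i<N. itinerary x i < k i" using label assms by (simp add: itinerary_apply)
  then show ?thesis by (auto simp: mem_cylinder_iff itinerary_eq_iff itinerary_apply)
qed

lemma finite_itineraries: "finite (itinerary ` X 0)"
  by (rule finite_subset[OF image_subsetI[OF itinerary_in_PiE]]) (simp_all add: finite_PiE)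

lemma inj_on_cylinder: "inj_on cylinder (itinerary ` X 0)"
  by (rule inj_onI) (use cylinder_itinerary in blast)

lemma cylinder_sets: "x \<in> X 0 \<Longrightarrow> cylinder (itinerary x) \<in> sets (\<mu> 0)"
proof -
  assume x: "x \<in> X 0"
  have "0 \<in> {..<N}" using N_ge_1 by simp
  then have "{..<N} \<noteq> {}" by blast
  then have "cylinder (itinerary x) = (\<Inter>i\<in>{..<N}. iter i -` P i (label i x) \<inter> space (\<mu> 0))"
    unfolding cylinder_def itinerary_def space_\<mu> by auto
  also have "\<dots> \<in> sets (\<mu> 0)"
    using \<open>{..<N} \<noteq> {}\<close> label[OF x]
    by (intro sets.finite_INT measurable_sets[OF measurable_iter] P_sets) auto
  finally show ?thesis .
qed

abbreviation "pr A \<equiv> measure (\<mu> 0) A"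

lemma partition_entropy_join:
  "partition_entropy (\<mu> 0) (join_partition X f k P N) = - (\<Sum>s\<in>itinerary ` X 0. pr (cylinder s) * ln (pr (cylinder s)))"
proof -
  define J where "J = join_partition X f k P N"
  have J: "J = {cylinder s | s. \<forall>i<N. s i < k i}"
    unfolding J_def join_partition_def cylinder_def ..
  have sub1: "cylinder ` itinerary ` X 0 \<subseteq> J"
    unfolding J using label by (auto simp: itinerary_def)
  have sub2: "J \<subseteq> insert {} (cylinder ` itinerary ` X 0)"
  proof
    fix A assume "A \<in> J"
    then obtain s where s: "A = cylinder s" "\<forall>i<N. s i < k i" unfolding J by auto
    show "A \<in> insert {} (cylinder ` itinerary ` X 0)"
    proof (cases "A = {}")
      case False
      then obtain y where "y \<in> cylinder s" using s by auto
      then have y: "y \<in> X 0" "\<forall>i<N. label i y = s i" using mem_cylinder_iff[OF s(2)] by auto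
      then have "cylinder s = cylinder (itinerary y)"
        unfolding cylinder_itinerary[OF y(1)] by (auto simp: mem_cylinder_iff[OF s(2)] itinerary_eq_iff)
      with y s show ?thesis by auto
    qed simp
  qed
  have "finite J" using sub2 finite_itineraries by (meson finite.insertI finite_imageI finite_subset)
  then have "(\<Sum>A\<in>J. pr A * ln (pr A)) = (\<Sum>A\<in>cylinder ` itinerary ` X 0. pr A * ln (pr A))"
    by (rule sum.mono_neutral_right[OF _ sub1]) (use sub2 in auto)
  also have "\<dots> = (\<Sum>s\<in>itinerary ` X 0. pr (cylinder s) * ln (pr (cylinder s)))"
    by (rule sum.reindex[OF inj_on_cylinder, unfolded comp_def])
  finally show ?thesis unfolding partition_entropy_def J_def by simp
qed

lemma
  shows integrable_itinerary: "integrable (\<mu> 0) (\<lambda>x. F (itinerary x))"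
    and integral_itinerary: "integral\<^sup>L (\<mu> 0) (\<lambda>x. F (itinerary x)) = (\<Sum>s\<in>itinerary ` X 0. F s * pr (cylinder s))"
proof -
  have fin: "finite_measure (\<mu> 0)" using prob_space_\<mu> by (simp add: prob_space_def)
  have vimage: "itinerary -` {s} \<inter> X 0 = cylinder s" if "s \<in> itinerary ` X 0" for s
    using that cylinder_itinerary by auto
  note integrable_finite_range[OF fin, of itinerary F] integral_finite_range[OF fin, of itinerary F]
  then show "integrable (\<mu> 0) (\<lambda>x. F (itinerary x))"
    "integral\<^sup>L (\<mu> 0) (\<lambda>x. F (itinerary x)) = (\<Sum>s\<in>itinerary ` X 0. F s * pr (cylinder s))"
    using finite_itineraries vimage cylinder_sets by (auto simp: space_\<mu> intro!: sum.cong)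
qed

lemma sum_measure_cylinders: "(\<Sum>s\<in>itinerary ` X 0. pr (cylinder s)) = 1"
  using integral_itinerary[of "\<lambda>_. 1"] prob_space.prob_space[OF prob_space_\<mu>] by simp

lemma finite_codes: "finite codes"
proof (rule finite_subset[OF _ finite_PiE])
  show "codes \<subseteq> PiE {..<N} (\<lambda>i. insert None (Some ` {..<k i}))"
    unfolding codes_def code_def using label by (auto intro!: restrict_PiE_iff[THEN iffD2])
qed (auto intro: finite_imageI)

lemma card_codes_ge_1: "card codes \<ge> 1"
  using finite_codes X0_nonempty by (simp add: codes_def Suc_le_eq card_gt_0_iff)

definition symbol_weight :: "nat \<Rightarrow> nat option \<Rightarrow> real" where
  "symbol_weight a t = (case t of None \<Rightarrow> 1 / real K | Some b \<Rightarrow> if a = b then 1 else 0)"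
definition "weight s = (\<Sum>t\<in>codes. \<Prod>i<N. symbol_weight (s i) (t i)) / real (card codes)"
definition "erased_count x = card {i\<in>{..<N}. code x i = None}"

lemma symbol_weight_nonneg: "symbol_weight a t \<ge> 0"
  unfolding symbol_weight_def by (auto split: option.splits)

lemma sum_symbol_weight_le_1:
  assumes "t \<in> codes" "i < N"
  shows "(\<Sum>a<k i. symbol_weight a (t i)) \<le> 1"
proof (cases "t i")
  case None
  then show ?thesis using k_le_K[of i] K_ge_1 by (simp add: symbol_weight_def)
next
  case (Some b)
  then have "b < k i" using assms label unfolding codes_def code_def by (auto split: if_splits)
  then show ?thesis using Some by (simp add: symbol_weight_def)
qed

lemma sum_weight_le_1: "(\<Sum>s\<in>itinerary ` X 0. weight s) \<le> 1"
proof -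
  define PE where "PE = PiE {..<N} (\<lambda>i. {..<k i})"
  have "(\<Sum>s\<in>itinerary ` X 0. \<Prod>i<N. symbol_weight (s i) (t i)) \<le> 1" if t: "t \<in> codes" for t
  proof -
    have "(\<Sum>s\<in>itinerary ` X 0. \<Prod>i<N. symbol_weight (s i) (t i)) \<le> (\<Sum>s\<in>PE. \<Prod>i<N. symbol_weight (s i) (t i))"
      using itinerary_in_PiE unfolding PE_def
      by (intro sum_mono2 finite_PiE) (auto intro: prod_nonneg symbol_weight_nonneg)
    also have "\<dots> = (\<Prod>i<N. \<Sum>a<k i. symbol_weight a (t i))"
      unfolding PE_def by (rule prod_sum_PiE[symmetric]) auto
    also have "\<dots> \<le> 1"
      using sum_symbol_weight_le_1[OF t]
      by (intro prod_le_1) (auto intro: sum_nonneg symbol_weight_nonneg)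
    finally show ?thesis .
  qed
  then have le: "(\<Sum>t\<in>codes. \<Sum>s\<in>itinerary ` X 0. \<Prod>i<N. symbol_weight (s i) (t i)) \<le> real (card codes)"
    using sum_mono[of codes _ "\<lambda>_. 1::real"] by simp
  have "(\<Sum>s\<in>itinerary ` X 0. weight s)
      = (\<Sum>t\<in>codes. \<Sum>s\<in>itinerary ` X 0. \<Prod>i<N. symbol_weight (s i) (t i)) / real (card codes)"
    unfolding weight_def by (simp add: sum_divide_distrib[symmetric] sum.swap[of _ codes])
  also have "\<dots> \<le> 1" using le card_codes_ge_1 by simp
  finally show ?thesis .
qed

lemma weight_ge: "x \<in> X 0 \<Longrightarrow> weight (itinerary x) \<ge> (1 / real K) ^ erased_count x / real (card codes)"
proof -
  assume x: "x \<in> X 0"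
  have "(1 / real K) ^ erased_count x = (\<Prod>i<N. if code x i = None then 1 / real K else 1)"
    unfolding erased_count_def by (simp add: prod.If_cases Int_def)
  also have "\<dots> = (\<Prod>i<N. symbol_weight (itinerary x i) (code x i))"
    by (rule prod.cong) (auto simp: symbol_weight_def itinerary_def code_def)
  also have "\<dots> \<le> (\<Sum>t\<in>codes. \<Prod>i<N. symbol_weight (itinerary x i) (t i))"
    by (rule member_le_sum) (use x finite_codes in \<open>auto simp: codes_def intro: prod_nonneg symbol_weight_nonneg\<close>)
  finally show ?thesis unfolding weight_def using card_codes_ge_1 by (simp add: divide_right_mono)
qed

lemma weight_lower_bound_pos: "(1 / real K) ^ erased_count x / real (card codes) > 0"
  using K_ge_1 card_codes_ge_1 by simp

lemma weight_pos: "x \<in> X 0 \<Longrightarrow> weight (itinerary x) > 0"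
  using less_le_trans[OF weight_lower_bound_pos weight_ge] .

lemma neg_ln_weight_le:
  assumes x: "x \<in> X 0"
  shows "- ln (weight (itinerary x)) \<le> ln (real (card codes)) + real (erased_count x) * ln (real K)"
proof -
  have "ln ((1 / real K) ^ erased_count x / real (card codes)) \<le> ln (weight (itinerary x))"
    using weight_ge[OF x] weight_lower_bound_pos weight_pos[OF x] by (subst ln_le_cancel_iff) auto
  moreover have "ln ((1 / real K) ^ erased_count x / real (card codes))
      = - (real (erased_count x) * ln (real K)) - ln (real (card codes))"
    using K_ge_1 card_codes_ge_1 by (simp add: ln_div ln_realpow)
  ultimately show ?thesis by linarith
qed

lemma partition_entropy_join_le_integral:
  "partition_entropy (\<mu> 0) (join_partition X f k P N) \<le> integral\<^sup>L (\<mu> 0) (\<lambda>x. - ln (weight (itinerary x)))"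
proof -
  have "- (\<Sum>s\<in>itinerary ` X 0. pr (cylinder s) * ln (pr (cylinder s)))
      \<le> - (\<Sum>s\<in>itinerary ` X 0. pr (cylinder s) * ln (weight s))"
    by (rule entropy_le_cross_entropy[OF finite_itineraries _ sum_measure_cylinders _ sum_weight_le_1])
      (auto intro: weight_pos)
  also have "\<dots> = integral\<^sup>L (\<mu> 0) (\<lambda>x. - ln (weight (itinerary x)))"
    using integral_itinerary[of "\<lambda>s. - ln (weight s)"] by (simp add: sum_negf[symmetric] mult.commute)
  finally show ?thesis unfolding partition_entropy_join .
qed

definition "off_core i = {x \<in> X 0. \<not> in_core i x}"
definition "erased i = {x \<in> X 0. code x i = None}"
definition "block i = {i'. i' < N \<and> i' div m = i div m}"

lemma off_core_eq: "off_core i = iter i -` (X i - (\<Union>a<k i. C i a)) \<inter> X 0"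
  unfolding off_core_def in_core_def using iter_in by auto

lemma outside_cores_sets: "X i - (\<Union>a<k i. C i a) \<in> sets (\<mu> i)"
proof -
  have "(\<Union>a<k i. C i a) \<in> sets (\<mu> i)" by (rule sets.finite_UN) (auto intro: C_sets)
  then show ?thesis using sets.top[of "\<mu> i"] space_\<mu> by (metis sets.Diff)
qed

lemma off_core_sets: "off_core i \<in> sets (\<mu> 0)"
  unfolding off_core_eq using measurable_sets[OF measurable_iter outside_cores_sets] space_\<mu> by simp

lemma measure_off_core: "pr (off_core i) \<le> real K * \<epsilon>"
proof -
  interpret prob_space "\<mu> i" by (rule prob_space_\<mu>)
  have "pr (off_core i) = measure (\<mu> i) (X i - (\<Union>a<k i. C i a))"
    unfolding off_core_eq by (rule measure_iter_vimage[OF outside_cores_sets])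
  also have "\<dots> \<le> measure (\<mu> i) (\<Union>a<k i. P i a - C i a)"
  proof (rule finite_measure_mono)
    show "X i - (\<Union>a<k i. C i a) \<subseteq> (\<Union>a<k i. P i a - C i a)" using P_cover[of i] by blast
    show "(\<Union>a<k i. P i a - C i a) \<in> sets (\<mu> i)" by (rule sets.finite_UN) (auto intro: P_sets C_sets)
  qed
  also have "\<dots> \<le> (\<Sum>a<k i. measure (\<mu> i) (P i a - C i a))"
    by (rule measure_UNION_le) (auto intro: P_sets C_sets)
  also have "\<dots> \<le> real (k i) * \<epsilon>"
    using sum_mono[of "{..<k i}" _ "\<lambda>_. \<epsilon>"] measure_P_minus_C by simp
  also have "\<dots> \<le> real K * \<epsilon>" using k_le_K[of i] \<epsilon>_pos by (simp add: mult_right_mono)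
  finally show ?thesis .
qed

lemma erased_eq: "i < N \<Longrightarrow> erased i = (\<Union>i'\<in>block i. off_core i')"
  unfolding erased_def off_core_def block_def code_def good_block_def by auto

lemma card_block: "card (block i) \<le> m"
proof -
  have "block i \<subseteq> {i div m * m ..< i div m * m + m}"
  proof
    fix i' assume "i' \<in> block i"
    then have "i' div m = i div m" unfolding block_def by simp
    then have "i div m * m + i' mod m = i'" by (metis div_mult_mod_eq)
    moreover have "i' mod m < m" using m_ge_1 by simp
    ultimately show "i' \<in> {i div m * m ..< i div m * m + m}" unfolding atLeastLessThan_iff by linarith
  qed
  then show ?thesis by (metis card_atLeastLessThan card_mono diff_add_inverse finite_atLeastLessThan)
qed

lemma finite_block: "finite (block i)"
  unfolding block_def by auto

lemma erased_sets: "i < N \<Longrightarrow> erased i \<in> sets (\<mu> 0)"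
  using erased_eq finite_block off_core_sets by (metis sets.finite_UN)

lemma measure_erased: "i < N \<Longrightarrow> pr (erased i) \<le> real m * real K * \<epsilon>"
proof -
  assume i: "i < N"
  have "pr (erased i) \<le> (\<Sum>i'\<in>block i. pr (off_core i'))"
    unfolding erased_eq[OF i] by (rule measure_UNION_le[OF finite_block]) (rule off_core_sets)
  also have "\<dots> \<le> real (card (block i)) * (real K * \<epsilon>)"
    using sum_mono[of "block i" _ "\<lambda>_. real K * \<epsilon>"] measure_off_core by simp
  also have "\<dots> \<le> real m * (real K * \<epsilon>)" using card_block[of i] \<epsilon>_pos by (intro mult_right_mono) auto
  finally show ?thesis by simp
qed

lemma erased_count_eq_sum: "x \<in> X 0 \<Longrightarrow> real (erased_count x) = (\<Sum>i<N. indicator (erased i) x)"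
proof -
  assume x: "x \<in> X 0"
  have "real (erased_count x) = (\<Sum>i\<in>{i\<in>{..<N}. code x i = None}. 1)"
    unfolding erased_count_def by simp
  also have "\<dots> = (\<Sum>i<N. if code x i = None then 1 else 0)"
    by (rule sum.inter_filter) simp
  also have "\<dots> = (\<Sum>i<N. indicator (erased i) x)"
    using x by (intro sum.cong) (auto simp: erased_def indicator_def)
  finally show ?thesis .
qed

lemma integral_neg_ln_weight_le:
  "integral\<^sup>L (\<mu> 0) (\<lambda>x. - ln (weight (itinerary x))) \<le> ln (real (card codes)) + ln (real K) * (\<Sum>i<N. pr (erased i))"
proof -
  interpret prob_space "\<mu> 0" by (rule prob_space_\<mu>)
  have ind: "integrable (\<mu> 0) (indicator (erased i) :: 'a \<Rightarrow> real)" if "i < N" for i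
    using erased_sets[OF that] by (intro integrable_real_indicator) (auto simp: emeasure_finite less_top[symmetric])
  define g where "g x = ln (real (card codes)) + ln (real K) * (\<Sum>i<N. indicator (erased i) x :: real)" for x
  have "integrable (\<mu> 0) g" unfolding g_def using ind
    by (intro Bochner_Integration.integrable_add integrable_mult_right Bochner_Integration.integrable_sum) auto
  then have "integral\<^sup>L (\<mu> 0) (\<lambda>x. - ln (weight (itinerary x))) \<le> integral\<^sup>L (\<mu> 0) g"
  proof (rule Bochner_Integration.integral_mono[OF integrable_itinerary])
    fix x assume "x \<in> space (\<mu> 0)"
    then have x: "x \<in> X 0" by (simp add: space_\<mu>)
    show "- ln (weight (itinerary x)) \<le> g x"
      unfolding g_def using neg_ln_weight_le[OF x] erased_count_eq_sum[OF x] by (simp add: mult.commute)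
  qed
  also have "integral\<^sup>L (\<mu> 0) g = ln (real (card codes)) + ln (real K) * (\<Sum>i<N. pr (erased i))"
    unfolding g_def using ind prob_space erased_sets
    by (subst Bochner_Integration.integral_add) (auto simp: Bochner_Integration.integral_sum Int_absorb2 sets.sets_into_space)
  finally show ?thesis .
qed

lemma code_eq:
  assumes x: "x \<in> X 0" and y: "y \<in> X 0" and e: "e \<in> X 0"
    and close_x: "\<forall>i<N. d i (iter i x) (iter i e) \<le> \<delta>/3"
    and close_y: "\<forall>i<N. d i (iter i y) (iter i e) \<le> \<delta>/3"
    and good: "\<forall>i<N. good_block (i div m) x \<longleftrightarrow> good_block (i div m) y"
  shows "code x = code y"
  unfolding code_def
proof (rule restrict_ext)
  fix i assume i: "i \<in> {..<N}"
  show "(if good_block (i div m) x then Some (label i x) else None)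
      = (if good_block (i div m) y then Some (label i y) else None)"
  proof (cases "good_block (i div m) x")
    case True
    with good i have "in_core i x" "in_core i y" unfolding good_block_def by auto
    then obtain a b where ab: "a < k i" "iter i x \<in> C i a" "b < k i" "iter i y \<in> C i b"
      unfolding in_core_def by auto
    have "d i (iter i x) (iter i y) \<le> d i (iter i x) (iter i e) + d i (iter i e) (iter i y)"
      using d_triangle iter_in x y e by blast
    also have "\<dots> < \<delta>"
    proof -
      have "d i (iter i x) (iter i e) \<le> \<delta>/3" "d i (iter i y) (iter i e) \<le> \<delta>/3"
        using close_x close_y i by auto
      then show ?thesis using d_commute[OF iter_in[OF e] iter_in[OF y], of i] \<delta>_pos by linarith
    qed
    finally have "a = b" using C_separated[OF ab(1,3) _ ab(2,4)] by force
    then have "label i x = a" "label i y = a" using label_unique x y ab C_subset by blast+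
    then show ?thesis using True good i by simp
  qed (use good i in simp)
qed

lemma \<delta>_third_pos: "\<delta>/3 > 0"
  using \<delta>_pos by simp

lemma card_codes_le: "real (card codes) \<le> real (r_sep X d f N (\<delta>/3)) * 2 ^ (N div m + 1)"
proof -
  obtain E where E: "finite E" "separated_set X d f N (\<delta>/3) E" "card E = r_sep X d f N (\<delta>/3)"
    "\<And>x. x \<in> X 0 \<Longrightarrow> \<exists>e\<in>E. \<forall>i<N. d i (iter i x) (iter i e) \<le> \<delta>/3"
    by (rule obtain_maximal_separated_set[OF N_ge_1 \<delta>_third_pos]) blast
  have "E \<subseteq> X 0" using E(2) unfolding separated_set_def by auto
  define center where "center x = (SOME e. e \<in> E \<and> (\<forall>i<N. d i (iter i x) (iter i e) \<le> \<delta>/3))" for x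
  have center: "center x \<in> E \<and> (\<forall>i<N. d i (iter i x) (iter i (center x)) \<le> \<delta>/3)" if "x \<in> X 0" for x
    unfolding center_def by (rule someI_ex) (use E(4) that in blast)
  define rep where "rep = inv_into (X 0) code"
  have rep: "rep t \<in> X 0 \<and> code (rep t) = t" if "t \<in> codes" for t
    using that unfolding rep_def codes_def by (auto intro: inv_into_into f_inv_into_f)
  define BL where "BL = (\<lambda>i. i div m) ` {..<N}"
  define \<phi> where "\<phi> t = (center (rep t), {j\<in>BL. good_block j (rep t)})" for t
  have "inj_on \<phi> codes"
  proof (rule inj_onI)
    fix t1 t2 assume t: "t1 \<in> codes" "t2 \<in> codes" "\<phi> t1 = \<phi> t2"
    then have "\<forall>i<N. good_block (i div m) (rep t1) \<longleftrightarrow> good_block (i div m) (rep t2)"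
      unfolding \<phi>_def BL_def by (auto simp: set_eq_iff)
    moreover have "center (rep t1) = center (rep t2)" using t(3) unfolding \<phi>_def by simp
    moreover have "rep t1 \<in> X 0" "rep t2 \<in> X 0" using rep t by auto
    ultimately have "code (rep t1) = code (rep t2)"
      using center[of "rep t1"] center[of "rep t2"] \<open>E \<subseteq> X 0\<close>
      by (intro code_eq[of _ _ "center (rep t1)"]) auto
    then show "t1 = t2" using rep t by metis
  qed
  have "finite BL" unfolding BL_def by simp
  have "card codes = card (\<phi> ` codes)" using card_image[OF \<open>inj_on \<phi> codes\<close>] by simp
  also have "\<dots> \<le> card (E \<times> Pow BL)"
    using E(1) \<open>finite BL\<close> rep center unfolding \<phi>_def by (intro card_mono) auto
  also have "\<dots> = card E * 2 ^ card BL"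
    unfolding BL_def by (simp add: card_cartesian_product card_Pow)
  also have "\<dots> \<le> card E * 2 ^ (N div m + 1)"
    using card_image_div_lessThan unfolding BL_def by (intro mult_le_mono2 power_increasing) simp_all
  finally have "real (card codes) \<le> real (card E * 2 ^ (N div m + 1))" by linarith
  then show ?thesis using E(3) by simp
qed

lemma partition_entropy_join_le:
  "partition_entropy (\<mu> 0) (join_partition X f k P N)
    \<le> ln (real (r_sep X d f N (\<delta>/3))) + real (N div m + 1) * ln 2 + real N * (real m * real K * \<epsilon>) * ln (real K)"
proof -
  have r1: "real (r_sep X d f N (\<delta>/3)) \<ge> 1" using r_sep_ge_1[OF N_ge_1 \<delta>_third_pos] by simp
  have "ln (real (card codes)) \<le> ln (real (r_sep X d f N (\<delta>/3)) * 2 ^ (N div m + 1))"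
    using card_codes_le card_codes_ge_1 r1 by (subst ln_le_cancel_iff) auto
  also have "\<dots> = ln (real (r_sep X d f N (\<delta>/3))) + real (N div m + 1) * ln 2"
    using r1 by (simp add: ln_mult ln_realpow algebra_simps)
  finally have codes: "ln (real (card codes)) \<le> ln (real (r_sep X d f N (\<delta>/3))) + real (N div m + 1) * ln 2" .
  have "(\<Sum>i<N. pr (erased i)) \<le> real N * (real m * real K * \<epsilon>)"
    using sum_mono[of "{..<N}" _ "\<lambda>_. real m * real K * \<epsilon>"] measure_erased by simp
  then have "ln (real K) * (\<Sum>i<N. pr (erased i)) \<le> real N * (real m * real K * \<epsilon>) * ln (real K)"
    using K_ge_1 by (simp add: mult.commute mult_left_mono)
  then show ?thesis
    using partition_entropy_join_le_integral integral_neg_ln_weight_le codes by linarith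
qed

end

lemma (in measured_tnds) metric_entropy_part_le:
  assumes "borel_partition_seq X d k P" "\<And>n. k n \<le> K" "K \<ge> 1"
    and "compact_cores X d \<mu> k P \<epsilon> \<delta> C" "\<epsilon> > 0" "\<delta> > 0" and m: "m \<ge> 1"
  shows "metric_entropy_part X f \<mu> k P
    \<le> top_entropy X d f + ereal (ln 2 / real m + real m * real K * \<epsilon> * ln (real K))"
proof -
  define A where "A = ln 2 / real m + real m * real K * \<epsilon> * ln (real K)"
  have "A \<ge> 0" unfolding A_def using assms by simp
  have bound: "ereal (partition_entropy (\<mu> 0) (join_partition X f k P N) / real N)
      \<le> ereal (ln (real (r_sep X d f N (\<delta>/3))) / real N) + ereal (A + ln 2 / real N)" for N
  proof (cases "N = 0")
    case False
    interpret misiurewicz_coding X d f \<mu> k P K \<epsilon> \<delta> C m N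
      using assms False by unfold_locales auto
    have "real (N div m) * real m \<le> real N"
      by (metis div_times_less_eq_dividend of_nat_le_iff of_nat_mult)
    then have blocks: "real (N div m) / real N \<le> 1 / real m"
      using m False by (simp add: field_simps)
    let ?r = "real (r_sep X d f N (\<delta>/3))"
    have "partition_entropy (\<mu> 0) (join_partition X f k P N) / real N
        \<le> (ln ?r + real (N div m + 1) * ln 2 + real N * (real m * real K * \<epsilon>) * ln (real K)) / real N"
      using partition_entropy_join_le by (simp add: divide_right_mono)
    also have "\<dots> = ln ?r / real N + real (N div m) / real N * ln 2 + ln 2 / real N
        + real m * real K * \<epsilon> * ln (real K)"
      using False by (simp add: field_simps)
    also have "\<dots> \<le> ln ?r / real N + 1 / real m * ln 2 + ln 2 / real N + real m * real K * \<epsilon> * ln (real K)"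
      using blocks assms by (intro add_mono mult_right_mono) auto
    finally show ?thesis unfolding A_def by simp
  qed (simp add: \<open>A \<ge> 0\<close>)
  have "metric_entropy_part X f \<mu> k P
      \<le> limsup (\<lambda>N. ereal (ln (real (r_sep X d f N (\<delta>/3))) / real N) + ereal (A + ln 2 / real N))"
    unfolding metric_entropy_part_def by (rule Limsup_mono) (use bound in auto)
  also have "\<dots> \<le> separation_growth (\<delta>/3) + limsup (\<lambda>N. ereal (A + ln 2 / real N))"
    unfolding separation_growth_def by (rule ereal_limsup_add_mono)
  also have "limsup (\<lambda>N. ereal (A + ln 2 / real N)) = ereal A"
  proof (rule lim_imp_Limsup)
    show "(\<lambda>N. ereal (A + ln 2 / real N)) \<longlonglongrightarrow> ereal A"
      by (intro tendsto_intros lim_const_over_n[THEN tendsto_add[OF tendsto_const], simplified])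
  qed simp
  also have "separation_growth (\<delta>/3) + ereal A \<le> top_entropy X d f + ereal A"
    using separation_growth_le_top_entropy \<open>\<delta> > 0\<close> by (intro add_right_mono) simp
  finally show ?thesis unfolding A_def .
qed

lemma small_block_error:
  fixes r L :: real
  assumes r: "r > 0" and L: "L \<ge> 0"
  obtains m :: nat and \<epsilon> :: real where "m \<ge> 1" "\<epsilon> > 0" "ln 2 / real m + real m * \<epsilon> * L \<le> r"
proof -
  obtain m :: nat where m: "2 * ln 2 / r < real m" using reals_Archimedean2 by blast
  then have "m \<ge> 1" using r by (cases m) (auto simp: divide_less_0_iff)
  have "ln 2 / real m \<le> r / 2" using m r \<open>m \<ge> 1\<close> by (simp add: field_simps)
  define B where "B = real m * L"
  have "B \<ge> 0" using L unfolding B_def by simp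
  define \<epsilon> where "\<epsilon> = r / (2 * (B + 1))"
  have "\<epsilon> > 0" using r \<open>B \<ge> 0\<close> unfolding \<epsilon>_def by simp
  have "real m * \<epsilon> * L = r / 2 * (B / (B + 1))"
    using \<open>B \<ge> 0\<close> unfolding \<epsilon>_def B_def by (simp add: field_simps)
  also have "\<dots> \<le> r / 2"
    using r \<open>B \<ge> 0\<close> by (intro mult_left_le) simp_all
  finally show thesis
    using \<open>ln 2 / real m \<le> r / 2\<close> by (intro that[OF \<open>m \<ge> 1\<close> \<open>\<epsilon> > 0\<close>]) linarith
qed

lemma (in measured_tnds) metric_entropy_part_le_top_entropy:
  assumes "(k, P) \<in> misiurewicz_class X d \<mu>"
  shows "metric_entropy_part X f \<mu> k P \<le> top_entropy X d f"
proof (rule ereal_le_epsilon2)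
  fix r :: real assume "r > 0"
  obtain K0 where "\<And>n. k n \<le> K0" using misiurewicz_classD(2)[OF assms] by blast
  then obtain K where k_le_K: "\<And>n. k n \<le> K" and K: "K \<ge> 1" by (metis le_max_iff_disj max.cobounded2)
  obtain m \<epsilon> where m: "m \<ge> 1" and "\<epsilon> > 0"
    and small: "ln 2 / real m + real m * \<epsilon> * (real K * ln (real K)) \<le> r"
    using small_block_error[OF \<open>r > 0\<close>, of "real K * ln (real K)"] K by auto
  then obtain \<delta> C where "\<delta> > 0" "compact_cores X d \<mu> k P \<epsilon> \<delta> C"
    using misiurewicz_classD(3)[OF assms] by blast
  then have "metric_entropy_part X f \<mu> k P
      \<le> top_entropy X d f + ereal (ln 2 / real m + real m * real K * \<epsilon> * ln (real K))"
    using metric_entropy_part_le[OF misiurewicz_classD(1)[OF assms] k_le_K K] m \<open>\<epsilon> > 0\<close> by blast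
  also have "\<dots> \<le> top_entropy X d f + ereal r"
    using small by (intro add_left_mono) (simp add: algebra_simps)
  finally show "metric_entropy_part X f \<mu> k P \<le> top_entropy X d f + ereal r" .
qed

theorem mainTheorem1:
  fixes X :: "nat \<Rightarrow> 'a set" and d :: "nat \<Rightarrow> 'a \<Rightarrow> 'a \<Rightarrow> real"
    and f :: "nat \<Rightarrow> 'a \<Rightarrow> 'a" and \<mu> :: "nat \<Rightarrow> 'a measure"
  assumes "tnds X d f"
    and "equicontinuous_nds X d f"
    and "invariant_measures X d f \<mu>"
  shows "class_entropy X f \<mu> (misiurewicz_class X d \<mu>) \<le> top_entropy X d f"
proof -
  interpret measured_tnds X d f \<mu> using assms(1,3) by unfold_locales
  show ?thesis
    unfolding class_entropy_def using metric_entropy_part_le_top_entropy by (auto intro: SUP_least)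
qed

end
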